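(* Let $m\ge n$. Then every instance with $n$ agents having identical monotone valuations and $m$ goods has at least $n!$ EFX allocations, and there exists an instance with $n$ agents having identical additive valuations and $m$ goods that has exactly $n!$ EFX allocations. *)

theory Defs
  imports Complex_Main "HOL-Library.FuncSet"
begin


definition bundle_of :: "nat \<Rightarrow> (nat \<Rightarrow> nat) \<Rightarrow> nat \<Rightarrow> nat set" where
  "bundle_of m A i = {g \<in> {0..<m}. A g = i}"

definition allocations :: "nat \<Rightarrow> nat \<Rightarrow> (nat \<Rightarrow> nat) set" where
  "allocations n m = {0..<m} \<rightarrow>\<^sub>E {0..<n}"

definition monotone_valuation :: "nat \<Rightarrow> (nat set \<Rightarrow> real) \<Rightarrow> bool" where
  "monotone_valuation m v \<longleftrightarrow> v {} = 0 \<and>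
     (\<forall>S T. S \<subseteq> T \<and> T \<subseteq> {0..<m} \<longrightarrow> v S \<le> v T)"

definition additive_valuation :: "nat \<Rightarrow> (nat set \<Rightarrow> real) \<Rightarrow> bool" where
  "additive_valuation m v \<longleftrightarrow> (\<exists>val :: nat \<Rightarrow> real.
     (\<forall>g < m. 0 \<le> val g) \<and> (\<forall>S. S \<subseteq> {0..<m} \<longrightarrow> v S = (\<Sum>g\<in>S. val g)))"

definition EFX :: "nat \<Rightarrow> nat \<Rightarrow> (nat set \<Rightarrow> real) \<Rightarrow> (nat \<Rightarrow> nat) \<Rightarrow> bool" where
  "EFX n m v A \<longleftrightarrow> (\<forall>i < n. \<forall>j < n. \<forall>g \<in> bundle_of m A j.
      v (bundle_of m A j - {g}) \<le> v (bundle_of m A i))"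

definition EFX_allocations :: "nat \<Rightarrow> nat \<Rightarrow> (nat set \<Rightarrow> real) \<Rightarrow> (nat \<Rightarrow> nat) set" where
  "EFX_allocations n m v = {A \<in> allocations n m. EFX n m v A}"

end

theory Submission
  imports Defs "HOL-Library.Multiset_Order" "HOL-Library.Product_Lexorder"
    "HOL-Combinatorics.Permutations"
begin

text \<open>
  Lower bound: minimise, in the multiset order, the multiset of pairs \<open>(-v X\<^sub>i, -|X\<^sub>i|)\<close>
  (compared lexicographically) over all allocations. If some bundle violated EFX, or some
  bundle were empty while \<open>m \<ge> n\<close>, moving one good into the poorest bundle would replace the
  pairs of the two bundles involved by two pairs strictly smaller than the (maximal) pair of the
  poorest bundle, decreasing the potential. So a minimiser
  is EFX with all bundles nonempty; as the valuation is shared, the \<open>n!\<close> relabellings of its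
  bundles are distinct EFX allocations.

  Upper bound: give goods \<open>0, \<dots>, n - 2\<close> value \<open>m + 1\<close> and every other good value \<open>1\<close>. In
  an EFX allocation some agent receives no heavy good and so values her bundle at most \<open>m\<close>;
  hence a heavy good never shares its bundle. The \<open>n - 1\<close> heavy goods thus occupy distinct
  singleton bundles and all light goods form the remaining bundle, leaving only the choice of
  which agent receives which bundle.
\<close>

lemma bundle_of_subset: "bundle_of m A i \<subseteq> {0..<m}"
  unfolding bundle_of_def by auto

lemma finite_bundle_of: "finite (bundle_of m A i)"
  using bundle_of_subset by (rule finite_subset) simp

lemma bundle_of_upd_target: "g < m \<Longrightarrow> bundle_of m (A(g := i)) i = insert g (bundle_of m A i)"
  unfolding bundle_of_def by auto

lemma bundle_of_upd_source: "i \<noteq> A g \<Longrightarrow> bundle_of m (A(g := i)) (A g) = bundle_of m A (A g) - {g}"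
  unfolding bundle_of_def by auto

lemma bundle_of_upd_other: "k \<noteq> i \<Longrightarrow> k \<noteq> A g \<Longrightarrow> bundle_of m (A(g := i)) k = bundle_of m A k"
  unfolding bundle_of_def by auto

lemma finite_allocations: "finite (allocations n m)"
  unfolding allocations_def by (simp add: finite_PiE)

lemma allocations_nonempty: "0 < n \<Longrightarrow> allocations n m \<noteq> {}"
  unfolding allocations_def by (simp add: PiE_eq_empty_iff del: PiE_empty_domain)

lemma allocations_less: "A \<in> allocations n m \<Longrightarrow> g < m \<Longrightarrow> A g < n"
  unfolding allocations_def by auto

lemma allocations_upd: "A \<in> allocations n m \<Longrightarrow> g < m \<Longrightarrow> i < n \<Longrightarrow> A(g := i) \<in> allocations n m"
  unfolding allocations_def by (auto simp: PiE_iff extensional_def)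

lemma finite_EFX_allocations: "finite (EFX_allocations n m v)"
  unfolding EFX_allocations_def using finite_allocations by simp

lemma monotone_valuation_nonneg: "monotone_valuation m v \<Longrightarrow> S \<subseteq> {0..<m} \<Longrightarrow> 0 \<le> v S"
  unfolding monotone_valuation_def by (metis empty_subsetI)

lemma additive_imp_monotone_valuation:
  assumes "additive_valuation m v"
  shows "monotone_valuation m v"
proof -
  obtain val where nonneg: "\<forall>g < m. 0 \<le> val g"
    and v: "\<And>S. S \<subseteq> {0..<m} \<Longrightarrow> v S = (\<Sum>g\<in>S. val g)"
    using assms unfolding additive_valuation_def by blast
  have "v S \<le> v T" if "S \<subseteq> T" "T \<subseteq> {0..<m}" for S T
  proof -
    have "sum val S \<le> sum val T"
      using that nonneg by (intro sum_mono2) (auto intro: finite_subset)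
    then show ?thesis
      using that by (simp add: v)
  qed
  moreover have "v {} = 0"
    using v[of "{}"] by simp
  ultimately show ?thesis
    unfolding monotone_valuation_def by blast
qed


section \<open>A potential whose minimisers are EFX\<close>

text \<open>The cardinality tie-break makes moving even a good of value \<open>0\<close> into the poorest bundle
  an improvement.\<close>

definition poverty :: "(nat set \<Rightarrow> real) \<Rightarrow> nat \<Rightarrow> (nat \<Rightarrow> nat) \<Rightarrow> nat \<Rightarrow> real \<times> real" where
  "poverty v m A i = (- v (bundle_of m A i), - real (card (bundle_of m A i)))"

definition potential :: "nat \<Rightarrow> (nat set \<Rightarrow> real) \<Rightarrow> nat \<Rightarrow> (nat \<Rightarrow> nat) \<Rightarrow> (real \<times> real) multiset" where
  "potential n v m A = image_mset (poverty v m A) (mset_set {0..<n})"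

lemma potential_upd_less:
  assumes "i < n" "A g < n" "i \<noteq> A g"
    and less_target: "poverty v m (A(g := i)) i < poverty v m A i"
    and less_source: "poverty v m (A(g := i)) (A g) < poverty v m A i"
  shows "potential n v m (A(g := i)) < potential n v m A"
proof -
  let ?A' = "A(g := i)" and ?R = "{0..<n} - {i, A g}"
  have split: "{0..<n} = insert i (insert (A g) ?R)"
    using assms(1-3) by auto
  have agents: "mset_set {0..<n} = add_mset i (add_mset (A g) (mset_set ?R))"
    by (subst split) (use assms(3) in simp)
  have unchanged: "image_mset (poverty v m ?A') (mset_set ?R) = image_mset (poverty v m A) (mset_set ?R)"
    by (rule image_mset_cong) (simp add: poverty_def bundle_of_upd_other)
  have "multp (<) (image_mset (poverty v m A) (mset_set ?R) + {#poverty v m ?A' i, poverty v m ?A' (A g)#})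
                  (image_mset (poverty v m A) (mset_set ?R) + {#poverty v m A i, poverty v m A (A g)#})"
    by (rule one_step_implies_multp) (use less_target less_source in auto)
  then show ?thesis
    unfolding potential_def agents less_multiset_def using unchanged by (simp add: add.commute)
qed

lemma ex_potential_minimal_allocation:
  assumes "0 < n"
  obtains A where "A \<in> allocations n m" "\<And>A'. A' \<in> allocations n m \<Longrightarrow> potential n v m A \<le> potential n v m A'"
  using ex_is_arg_min_if_finite[OF finite_allocations[of n m] allocations_nonempty[OF assms, of m],
      of "potential n v m"]
  by (auto simp: is_arg_min_linorder intro: that)

lemma ex_poorest_agent:
  assumes "0 < n"
  obtains i0 where "i0 < n" "\<And>k. k < n \<Longrightarrow> poverty v m A k \<le> poverty v m A i0"
proof -
  let ?P = "poverty v m A ` {0..<n}"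
  have "Max ?P \<in> ?P" using assms by (intro Max_in) auto
  then obtain i0 where "i0 < n" "poverty v m A i0 = Max ?P" by auto
  then show ?thesis using that by simp
qed

context
  fixes n m :: nat and v :: "nat set \<Rightarrow> real" and A :: "nat \<Rightarrow> nat" and i0 :: nat
  assumes alloc: "A \<in> allocations n m"
    and minimal: "\<And>A'. A' \<in> allocations n m \<Longrightarrow> potential n v m A \<le> potential n v m A'"
    and poorest: "i0 < n" "\<And>k. k < n \<Longrightarrow> poverty v m A k \<le> poverty v m A i0"
begin

lemma potential_minimal_no_improving_move:
  assumes "g < m" "A g \<noteq> i0"
    and "poverty v m (A(g := i0)) i0 < poverty v m A i0"
    and "poverty v m (A(g := i0)) (A g) < poverty v m A i0"
  shows False
proof -
  have "potential n v m (A(g := i0)) < potential n v m A"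
    using potential_upd_less[of i0 n A g v m] poorest(1) allocations_less[OF alloc] assms
    by blast
  moreover have "potential n v m A \<le> potential n v m (A(g := i0))"
    using minimal allocations_upd[OF alloc \<open>g < m\<close> poorest(1)] by blast
  ultimately show False by simp
qed

lemma potential_minimal_EFX:
  assumes mono: "monotone_valuation m v"
  shows "EFX n m v A"
  unfolding EFX_def
proof (intro allI impI ballI)
  fix i j g assume "i < n" "j < n" and g: "g \<in> bundle_of m A j"
  then have "g < m" and j: "A g = j" by (auto simp: bundle_of_def)
  have vmono: "v S \<le> v T" if "S \<subseteq> T" "T \<subseteq> {0..<m}" for S T
    using mono that unfolding monotone_valuation_def by blast
  have poorest_value: "v (bundle_of m A i0) \<le> v (bundle_of m A i)"
    using poorest(2)[OF \<open>i < n\<close>] by (auto simp: poverty_def less_eq_prod_def)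
  show "v (bundle_of m A j - {g}) \<le> v (bundle_of m A i)"
  proof (rule ccontr)
    assume envy: "\<not> ?thesis"
    have "i0 \<noteq> j"
      using envy poorest_value vmono[of "bundle_of m A j - {g}" "bundle_of m A j"] bundle_of_subset by auto
    then have "g \<notin> bundle_of m A i0" using j by (auto simp: bundle_of_def)
    then have "card (insert g (bundle_of m A i0)) = Suc (card (bundle_of m A i0))"
      by (simp add: finite_bundle_of)
    moreover have "v (bundle_of m A i0) \<le> v (insert g (bundle_of m A i0))"
      using vmono bundle_of_subset \<open>g < m\<close> by (simp add: subset_insertI)
    ultimately show False
      using potential_minimal_no_improving_move[of g] \<open>g < m\<close> \<open>i0 \<noteq> j\<close> j envy poorest_value
      by (auto simp: poverty_def less_prod_def bundle_of_upd_target bundle_of_upd_source)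
  qed
qed

lemma potential_minimal_bundles_nonempty:
  assumes mono: "monotone_valuation m v" and "n \<le> m" "i < n"
  shows "bundle_of m A i \<noteq> {}"
proof
  assume empty: "bundle_of m A i = {}"
  have "poverty v m A i0 \<le> (0, 0)"
    using monotone_valuation_nonneg[OF mono bundle_of_subset]
    by (auto simp: poverty_def less_eq_prod_def)
  moreover have "(0, 0) \<le> poverty v m A i0"
    using poorest(2)[OF \<open>i < n\<close>] empty mono by (simp add: poverty_def monotone_valuation_def)
  ultimately have poor0: "poverty v m A i0 = (0, 0)" by (rule antisym)
  then have empty0: "bundle_of m A i0 = {}" by (simp add: poverty_def finite_bundle_of card_eq_0_iff)
  \<comment> \<open>pigeonhole: \<open>m \<ge> n\<close> goods in at most \<open>n - 1\<close> bundles\<close>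
  have "A ` {0..<m} \<subseteq> {0..<n} - {i0}"
    using empty0 allocations_less[OF alloc] by (auto simp: bundle_of_def)
  then have "\<not> inj_on A {0..<m}"
    using card_inj_on_le[of A "{0..<m}" "{0..<n} - {i0}"] poorest(1) \<open>n \<le> m\<close> by auto
  then obtain g g' where "g < m" "g' < m" "g \<noteq> g'" "A g = A g'"
    unfolding inj_on_def by auto
  then have "g' \<in> bundle_of m A (A g) - {g}" and "A g \<noteq> i0"
    using empty0 by (auto simp: bundle_of_def)
  then have "card (bundle_of m A (A g) - {g}) \<noteq> 0"
    using finite_bundle_of by (auto simp: card_eq_0_iff)
  moreover have "0 \<le> v {g}"
    using monotone_valuation_nonneg[OF mono] \<open>g < m\<close> by simp
  moreover have "0 \<le> v (bundle_of m A (A g) - {g})"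
    by (meson Diff_subset bundle_of_subset monotone_valuation_nonneg[OF mono] subset_trans)
  ultimately show False
    using potential_minimal_no_improving_move[of g] \<open>g < m\<close> \<open>A g \<noteq> i0\<close> empty0 poor0
    by (auto simp: poverty_def less_prod_def bundle_of_upd_target bundle_of_upd_source)
qed

end

lemma ex_EFX_allocation_bundles_nonempty:
  assumes "monotone_valuation m v" "0 < n" "n \<le> m"
  obtains A where "A \<in> EFX_allocations n m v" "\<And>i. i < n \<Longrightarrow> bundle_of m A i \<noteq> {}"
proof -
  obtain A where A: "A \<in> allocations n m"
    and minimal: "\<And>A'. A' \<in> allocations n m \<Longrightarrow> potential n v m A \<le> potential n v m A'"
    using ex_potential_minimal_allocation[OF \<open>0 < n\<close>] by blast
  obtain i0 where "i0 < n" "\<And>k. k < n \<Longrightarrow> poverty v m A k \<le> poverty v m A i0"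
    using ex_poorest_agent[OF \<open>0 < n\<close>] by blast
  note facts = A minimal this
  show ?thesis
    using that potential_minimal_EFX[OF facts assms(1)]
      potential_minimal_bundles_nonempty[OF facts assms(1,3)] A
    by (simp add: EFX_allocations_def)
qed


section \<open>Relabelling the bundles\<close>

text \<open>The value \<open>undefined\<close> beyond the goods keeps the result in the extensional
  function space \<open>allocations n m\<close>.\<close>

definition relabel :: "nat \<Rightarrow> (nat \<Rightarrow> nat) \<Rightarrow> (nat \<Rightarrow> nat) \<Rightarrow> nat \<Rightarrow> nat" where
  "relabel m \<sigma> A = (\<lambda>g. if g < m then \<sigma> (A g) else undefined)"

lemma bundle_of_relabel:
  "\<sigma> permutes {0..<n} \<Longrightarrow> bundle_of m (relabel m \<sigma> A) k = bundle_of m A (inv \<sigma> k)"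
  unfolding bundle_of_def relabel_def by (auto simp: permutes_inverses)

lemma relabel_in_allocations:
  assumes "A \<in> allocations n m" "\<sigma> permutes {0..<n}"
  shows "relabel m \<sigma> A \<in> allocations n m"
proof -
  have "\<sigma> k < n \<longleftrightarrow> k < n" for k
    using permutes_in_image[OF assms(2), of k] by simp
  then show ?thesis
    using assms(1) unfolding allocations_def relabel_def by (auto simp: PiE_iff extensional_def)
qed

lemma EFX_relabel:
  assumes "EFX n m v A" "\<sigma> permutes {0..<n}"
  shows "EFX n m v (relabel m \<sigma> A)"
proof -
  have "inv \<sigma> k < n" if "k < n" for k
    using permutes_in_image[OF permutes_inv[OF assms(2)]] that by simp
  then show ?thesis
    using assms(1) unfolding EFX_def bundle_of_relabel[OF assms(2)] by blast
qed

lemma inj_on_relabel: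
  assumes "\<And>i. i < n \<Longrightarrow> bundle_of m A i \<noteq> {}"
  shows "inj_on (\<lambda>\<sigma>. relabel m \<sigma> A) {\<sigma>. \<sigma> permutes {0..<n}}"
proof (rule inj_onI, rule ext)
  fix \<sigma> \<tau> k
  assume perms: "\<sigma> \<in> {\<sigma>. \<sigma> permutes {0..<n}}" "\<tau> \<in> {\<sigma>. \<sigma> permutes {0..<n}}"
    and eq: "relabel m \<sigma> A = relabel m \<tau> A"
  show "\<sigma> k = \<tau> k"
  proof (cases "k < n")
    case True
    then obtain g where "g < m" "A g = k" using assms by (auto simp: bundle_of_def)
    then show ?thesis using fun_cong[OF eq, of g] by (simp add: relabel_def)
  next
    case False
    then show ?thesis using perms by (simp add: permutes_not_in)
  qed
qed

theorem fact_le_card_EFX_allocations: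
  assumes "monotone_valuation m v" "1 \<le> n" "n \<le> m"
  shows "fact n \<le> card (EFX_allocations n m v)"
proof -
  obtain A where A: "A \<in> EFX_allocations n m v" and nonempty: "\<And>i. i < n \<Longrightarrow> bundle_of m A i \<noteq> {}"
    using ex_EFX_allocation_bundles_nonempty[OF assms(1) _ assms(3)] assms(2) by auto
  have "(\<lambda>\<sigma>. relabel m \<sigma> A) ` {\<sigma>. \<sigma> permutes {0..<n}} \<subseteq> EFX_allocations n m v"
    using A relabel_in_allocations EFX_relabel by (auto simp: EFX_allocations_def)
  with inj_on_relabel[OF nonempty] have "card {\<sigma>. \<sigma> permutes {0..<n}} \<le> card (EFX_allocations n m v)"
    using finite_EFX_allocations by (rule card_inj_on_le)
  then show ?thesis by (simp add: card_permutations)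
qed


section \<open>An instance with exactly \<open>n!\<close> EFX allocations\<close>

definition heavy_light :: "nat \<Rightarrow> nat \<Rightarrow> nat set \<Rightarrow> real" where
  "heavy_light n m S = (\<Sum>g\<in>S. if g < n - 1 then real m + 1 else 1)"

definition heavy_light_assignment :: "nat \<Rightarrow> nat \<Rightarrow> nat" where
  "heavy_light_assignment n g = (if g < n - 1 then g else n - 1)"

lemma additive_heavy_light: "additive_valuation m (heavy_light n m)"
  unfolding additive_valuation_def heavy_light_def by (intro exI[of _ "\<lambda>g. if g < n - 1 then real m + 1 else 1"]) auto

lemma heavy_light_ge:
  assumes "finite S" "h \<in> S" "h < n - 1"
  shows "real m + 1 \<le> heavy_light n m S"
proof -
  have "(if h < n - 1 then real m + 1 else 1) \<le> heavy_light n m S"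
    unfolding heavy_light_def by (rule member_le_sum) (use assms in auto)
  then show ?thesis using assms(3) by simp
qed

lemma heavy_light_le:
  assumes "S \<subseteq> {0..<m}" "\<And>h. h \<in> S \<Longrightarrow> n - 1 \<le> h"
  shows "heavy_light n m S \<le> real m"
proof -
  have "heavy_light n m S = (\<Sum>g\<in>S. 1)"
    unfolding heavy_light_def using assms(2) by (intro sum.cong) (auto dest: leD)
  also have "\<dots> = real (card S)" by simp
  also have "\<dots> \<le> real m"
    using card_mono[OF _ assms(1)] by simp
  finally show ?thesis .
qed

context
  fixes n m :: nat and A :: "nat \<Rightarrow> nat"
  assumes EFX_alloc: "A \<in> EFX_allocations n m (heavy_light n m)"
begin

lemma EFX_heavy_light_heavy_good_alone:
  assumes "h < n - 1" "h \<in> bundle_of m A j" "g \<in> bundle_of m A j"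
  shows "g = h"
proof (rule ccontr)
  assume "g \<noteq> h"
  have alloc: "A \<in> allocations n m" and EFX: "EFX n m (heavy_light n m) A"
    using EFX_alloc by (auto simp: EFX_allocations_def)
  have "card (A ` {0..<n - 1}) < card {0..<n}"
    using card_image_le[of "{0..<n - 1}" A] assms(1) by simp
  then have "\<not> {0..<n} \<subseteq> A ` {0..<n - 1}"
    using card_mono[of "A ` {0..<n - 1}" "{0..<n}"] by auto
  then obtain i where "i < n" "i \<notin> A ` {0..<n - 1}"
    by (meson atLeastLessThan_iff subsetI zero_le)
  then have "heavy_light n m (bundle_of m A i) \<le> real m"
    by (intro heavy_light_le bundle_of_subset) (auto simp: bundle_of_def)
  moreover have "real m + 1 \<le> heavy_light n m (bundle_of m A j - {g})"
    using heavy_light_ge[of _ h] assms \<open>g \<noteq> h\<close> by (simp add: finite_bundle_of)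
  moreover have "j < n"
    using assms(2) allocations_less[OF alloc] by (auto simp: bundle_of_def)
  ultimately show False
    using EFX \<open>i < n\<close> assms(3) unfolding EFX_def by fastforce
qed

context
  assumes "n \<le> m"
begin

lemma EFX_heavy_light_inj_on:
  "inj_on A {0..<n}"
proof (rule inj_onI, rule ccontr)
  fix g h assume "g \<in> {0..<n}" "h \<in> {0..<n}" "A g = A h" "g \<noteq> h"
  then have "g \<in> bundle_of m A (A g)" "h \<in> bundle_of m A (A g)" "g < n - 1 \<or> h < n - 1"
    using \<open>n \<le> m\<close> by (auto simp: bundle_of_def)
  then show False
    using EFX_heavy_light_heavy_good_alone \<open>g \<noteq> h\<close> by metis
qed

lemma EFX_heavy_light_image:
  "A ` {0..<n} = {0..<n}"
proof -
  have "A \<in> allocations n m" using EFX_alloc by (simp add: EFX_allocations_def)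
  then have "A ` {0..<n} \<subseteq> {0..<n}" using allocations_less \<open>n \<le> m\<close> by force
  then show ?thesis
    using EFX_heavy_light_inj_on by (simp add: card_image card_subset_eq)
qed

lemma EFX_heavy_light_light_good:
  assumes "n - 1 \<le> g" "g < m"
  shows "A g = A (n - 1)"
proof -
  have "A \<in> allocations n m" using EFX_alloc by (simp add: EFX_allocations_def)
  then have "A g \<in> A ` {0..<n}"
    using EFX_heavy_light_image allocations_less \<open>g < m\<close> by simp
  then obtain k where "k < n" "A g = A k"
    by auto
  moreover have "\<not> k < n - 1"
    using EFX_heavy_light_heavy_good_alone[of k "A k" g] assms \<open>A g = A k\<close> \<open>k < n\<close> \<open>n \<le> m\<close>
    by (auto simp: bundle_of_def)
  ultimately have "k = n - 1" by linarith
  with \<open>A g = A k\<close> show ?thesis by simp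
qed

lemma EFX_heavy_light_eq_relabel:
  obtains \<sigma> where "\<sigma> permutes {0..<n}" "A = relabel m \<sigma> (heavy_light_assignment n)"
proof -
  define \<sigma> where "\<sigma> k = (if k < n then A k else k)" for k
  have "inj_on \<sigma> {0..<n}"
    using EFX_heavy_light_inj_on by (simp add: \<sigma>_def inj_on_def)
  moreover have "\<sigma> ` {0..<n} = A ` {0..<n}"
    by (rule image_cong) (simp_all add: \<sigma>_def)
  ultimately have "bij_betw \<sigma> {0..<n} {0..<n}"
    using EFX_heavy_light_image by (simp add: bij_betw_def)
  then have "\<sigma> permutes {0..<n}"
    by (rule bij_imp_permutes) (simp add: \<sigma>_def)
  moreover have "A = relabel m \<sigma> (heavy_light_assignment n)"
  proof
    fix g
    have "A \<in> allocations n m" using EFX_alloc by (simp add: EFX_allocations_def)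
    then have "A g = undefined" if "\<not> g < m"
      using that by (auto simp: allocations_def PiE_iff extensional_def)
    then show "A g = relabel m \<sigma> (heavy_light_assignment n) g"
      using EFX_heavy_light_light_good[of g] allocations_less[OF \<open>A \<in> allocations n m\<close>, of g]
      by (auto simp: relabel_def \<sigma>_def heavy_light_assignment_def)
  qed
  ultimately show ?thesis using that by blast
qed

end

end

theorem card_EFX_allocations_heavy_light_le:
  assumes "n \<le> m"
  shows "card (EFX_allocations n m (heavy_light n m)) \<le> fact n"
proof -
  let ?P = "{\<sigma>. \<sigma> permutes {0..<n}}"
  have "EFX_allocations n m (heavy_light n m) \<subseteq> (\<lambda>\<sigma>. relabel m \<sigma> (heavy_light_assignment n)) ` ?P"
    using EFX_heavy_light_eq_relabel[OF _ assms] by blast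
  then have "card (EFX_allocations n m (heavy_light n m)) \<le> card ((\<lambda>\<sigma>. relabel m \<sigma> (heavy_light_assignment n)) ` ?P)"
    by (simp add: card_mono finite_permutations)
  also have "\<dots> \<le> card ?P"
    by (simp add: card_image_le finite_permutations)
  finally show ?thesis by (simp add: card_permutations)
qed

theorem theorem9:
  fixes n m :: nat
  assumes "1 \<le> n" and "n \<le> m"
  shows "(\<forall>v. monotone_valuation m v \<longrightarrow> fact n \<le> card (EFX_allocations n m v))
       \<and> (\<exists>v. additive_valuation m v \<and> card (EFX_allocations n m v) = fact n)"
proof
  show "\<forall>v. monotone_valuation m v \<longrightarrow> fact n \<le> card (EFX_allocations n m v)"
    using fact_le_card_EFX_allocations assms by blast
  have "card (EFX_allocations n m (heavy_light n m)) = fact n"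
    using fact_le_card_EFX_allocations[OF additive_imp_monotone_valuation[OF additive_heavy_light[of m n]] assms]
      card_EFX_allocations_heavy_light_le[OF assms(2)] by simp
  then show "\<exists>v. additive_valuation m v \<and> card (EFX_allocations n m v) = fact n"
    using additive_heavy_light by blast
qed

end
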